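(* Let $\theta>0$, $\zeta>0$, $P>0$, $\beta=\lfloor1/\theta\rfloor$, $\alpha=1/\theta-\beta$, and $g_\ell=\zeta P\,\mathrm{sinc}(\ell/\theta)$ for $\ell\in\mathbb{Z}$. Define the interference power $$I=\frac{1}{\zeta P}\sum_{\ell\in\mathbb{Z},\,\ell\neq0}|g_\ell|^2 .$$ Then $$I=\zeta P\Big(\theta^2\big(\beta^2+2\alpha\beta+\alpha\big)-1\Big),$$ and consequently the matched-filter per-terminal capacity $\log\!\big(1+\zeta P/(N_0+I)\big)$ equals $\log\!\Big(1+\frac{\zeta P}{N_0+\zeta P(\theta^2(\beta^2+2\alpha\beta+\alpha)-1)}\Big)$. In particular $I=0$ whenever $1/\theta$ is an integer.
   Context: $\mathrm{sinc}(x)=\sin(\pi x)/(\pi x)$ with $\mathrm{sinc}(0)=1$; $\log$ is natural. $g_\ell$ is the (approximate) effective channel between terminals $\ell$ positions apart on a line with spacing $\Delta_x$ in front of a large surface, with $\theta=\lambda/(2\Delta_x)$, $\lambda$ the wavelength, $P$ the per-terminal transmit power, $N_0$ the noise power spectral density. *)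

theory Defs
  imports "HOL-Analysis.Analysis"
begin

definition sinc :: "real \<Rightarrow> real" where
  "sinc x = (if x = 0 then 1 else sin (pi * x) / (pi * x))"

definition gain :: "real \<Rightarrow> real \<Rightarrow> real \<Rightarrow> int \<Rightarrow> real" where
  "gain \<zeta> P \<theta> l = \<zeta> * P * sinc (real_of_int l / \<theta>)"

definition interference :: "real \<Rightarrow> real \<Rightarrow> real \<Rightarrow> real" where
  "interference \<zeta> P \<theta> =
     (1 / (\<zeta> * P)) * infsum (\<lambda>l. \<bar>gain \<zeta> P \<theta> l\<bar>^2) (UNIV - {0::int})"

end

theory Submission
  imports Defs
begin

text \<open>
  Since \<open>sinc (n a)\<^sup>2 = (1 - cos (2 pi n a)) / (2 pi\<^sup>2 n\<^sup>2 a\<^sup>2)\<close> and the cosine only sees the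
  fractional part \<open>\<alpha>\<close> of \<open>a = 1/\<theta>\<close>, the interference is a multiple of
  \<open>\<Sum>n\<ge>1. (1 - cos (n y)) / n\<^sup>2\<close> at \<open>y = 2 pi \<alpha>\<close>. By the classical Fourier series
  \<open>\<Sum>n\<ge>1. cos (n y) / n\<^sup>2 = pi\<^sup>2/6 - pi y/2 + y\<^sup>2/4\<close> on \<open>[0, 2 pi)\<close> this equals
  \<open>pi\<^sup>2 (\<alpha> - \<alpha>\<^sup>2)\<close>, so the interference is \<open>\<zeta> P \<theta>\<^sup>2 (\<alpha> - \<alpha>\<^sup>2)\<close>, which is the claimed
  expression because \<open>\<theta> (\<alpha> + \<beta>) = 1\<close>.
  The Fourier series is obtained through its Abel means \<open>\<Sum>n\<ge>1. r\<^sup>n cos (n y) / n\<^sup>2\<close>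
  (\<open>r < 1\<close>): their derivative in \<open>y\<close> is \<open>Im (Ln (1 - r e\<^sup>i\<^sup>y))\<close> by the logarithm series,
  which tends to \<open>(y - pi)/2\<close> as \<open>r \<rightarrow> 1\<close>; dominated convergence of the integrals over
  \<open>[0, y]\<close> then gives the closed form.
\<close>

lemma inverse_Suc_squares_sums: "(\<lambda>n. 1 / (real (Suc n))^2) sums (pi^2 / 6)"
  using inverse_squares_sums by (simp add: add.commute)

lemma sin_power_series_sums_Im_Ln:
  fixes r y :: real
  assumes "0 \<le> r" "r < 1"
  shows "(\<lambda>n. r^Suc n * sin (real (Suc n) * y) / real (Suc n))
           sums (- Im (Ln (1 - of_real r * cis y)))"
proof -
  have "cmod (- (of_real r * cis y)) < 1" using assms by (simp add: norm_mult)
  from sums_Im[OF Ln_series'[OF this]]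
  have "(\<lambda>n. Im (- ((of_real r * cis y) ^ n) / of_nat n)) sums Im (Ln (1 - of_real r * cis y))"
    by simp
  also have "(\<lambda>n. Im (- ((of_real r * cis y) ^ n) / of_nat n)) = (\<lambda>n. - (r^n * sin (real n * y)) / real n)"
    by (auto simp: sin_n_Im_cis_pow_n power_mult_distrib Im_divide_of_nat simp flip: of_real_power)
  finally have "(\<lambda>n. - (r^n * sin (real n * y)) / real n) sums Im (Ln (1 - of_real r * cis y))" .
  hence "(\<lambda>n. - (r^Suc n * sin (real (Suc n) * y)) / real (Suc n))
           sums Im (Ln (1 - of_real r * cis y))"
    by (subst sums_Suc_iff) simp
  from sums_minus[OF this] show ?thesis by simp
qed

definition damped_cos_series :: "real \<Rightarrow> real \<Rightarrow> real" where
  "damped_cos_series r y = (\<Sum>n. r^Suc n * cos (real (Suc n) * y) / (real (Suc n))^2)"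

lemma damped_cos_series_term_bound:
  assumes "0 \<le> r" "r \<le> 1"
  shows "norm (r^Suc n * cos (real (Suc n) * y) / (real (Suc n))^2) \<le> 1 / (real (Suc n))^2"
proof -
  have "\<bar>r^Suc n * cos (real (Suc n) * y)\<bar> \<le> 1"
    using assms by (simp add: abs_mult power_le_one mult_le_one)
  thus ?thesis by (simp add: divide_right_mono)
qed

lemma damped_cos_series_sums:
  assumes "0 \<le> r" "r \<le> 1"
  shows "(\<lambda>n. r^Suc n * cos (real (Suc n) * y) / (real (Suc n))^2) sums damped_cos_series r y"
  unfolding damped_cos_series_def
  by (rule summable_sums, rule summable_comparison_test[OF _ sums_summable[OF inverse_Suc_squares_sums]])
     (use damped_cos_series_term_bound[OF assms] in blast)

lemma has_real_derivative_damped_cos_series: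
  fixes r y :: real
  assumes "0 \<le> r" "r < 1"
  shows "(damped_cos_series r has_real_derivative Im (Ln (1 - of_real r * cis y))) (at y)"
proof -
  define f where "f n y = r^Suc n * cos (real (Suc n) * y) / (real (Suc n))^2" for n y
  define f' where "f' n y = - (r^Suc n * sin (real (Suc n) * y) / real (Suc n))" for n y
  have "((\<lambda>y. c * cos (k * y) / k^2) has_real_derivative - (c * sin (k * x) / k)) (at x)"
    if "k \<noteq> 0" for c k x :: real
    using that by (auto intro!: derivative_eq_intros simp: power2_eq_square)
  hence f': "(f n has_field_derivative f' n x) (at x within UNIV)" for n x
    unfolding f_def f'_def by simp
  have uniform: "uniformly_convergent_on UNIV (\<lambda>n x. \<Sum>i<n. f' i x)"
  proof (rule Weierstrass_m_test'[where M = "\<lambda>n. r^Suc n"])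
    fix n x
    have "\<bar>sin (real (Suc n) * x)\<bar> \<le> real (Suc n)"
      using abs_sin_le_one[of "real (Suc n) * x"] by linarith
    hence "r^Suc n * (\<bar>sin (real (Suc n) * x)\<bar> / real (Suc n)) \<le> r^Suc n * 1"
      using assms by (intro mult_left_mono) auto
    thus "norm (f' n x) \<le> r ^ Suc n" using assms by (simp add: f'_def abs_mult)
  qed (use assms in \<open>simp add: summable_geometric\<close>)
  have "summable (\<lambda>n. f n 0)"
    using damped_cos_series_sums[of r 0] assms unfolding f_def by (simp add: sums_iff)
  from has_field_derivative_series'(2)[OF convex_UNIV f' uniform _ this]
  have "((\<lambda>x. \<Sum>n. f n x) has_field_derivative (\<Sum>n. f' n y)) (at y)" by simp
  moreover have "(\<Sum>n. f' n y) = Im (Ln (1 - of_real r * cis y))"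
    using sums_minus[OF sin_power_series_sums_Im_Ln[OF assms, of y]]
    unfolding f'_def by (simp add: sums_iff)
  ultimately show ?thesis by (simp add: damped_cos_series_def[abs_def] f_def)
qed

lemma damped_cos_series_has_integral:
  assumes "0 \<le> r" "r < 1" "0 \<le> y"
  shows "((\<lambda>t. Im (Ln (1 - of_real r * cis t)))
           has_integral (damped_cos_series r y - damped_cos_series r 0)) {0..y}"
proof (rule fundamental_theorem_of_calculus[OF assms(3)])
  fix x
  have "(damped_cos_series r has_real_derivative Im (Ln (1 - of_real r * cis x))) (at x within {0..y})"
    by (rule has_field_derivative_at_within[OF has_real_derivative_damped_cos_series[OF assms(1,2)]])
  thus "(damped_cos_series r has_vector_derivative Im (Ln (1 - of_real r * cis x))) (at x within {0..y})"
    by (simp add: has_real_derivative_iff_has_vector_derivative)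
qed

lemma tendsto_damped_cos_series:
  assumes "r \<longlonglongrightarrow> 1" "\<And>k. 0 \<le> r k" "\<And>k. r k \<le> 1"
  shows "(\<lambda>k. damped_cos_series (r k) y) \<longlonglongrightarrow> damped_cos_series 1 y"
  unfolding damped_cos_series_def
proof (rule conjunct2[OF conjunct2[OF tannerys_theorem[where M = "\<lambda>n. 1 / (real (Suc n))^2"]]])
  fix n
  show "(\<lambda>k. r k^Suc n * cos (real (Suc n) * y) / (real (Suc n))^2)
          \<longlonglongrightarrow> 1^Suc n * cos (real (Suc n) * y) / (real (Suc n))^2"
    by (intro tendsto_intros assms(1)) simp
next
  show "\<forall>\<^sub>F (n, k) in sequentially \<times>\<^sub>F sequentially.
          norm (r k^Suc n * cos (real (Suc n) * y) / (real (Suc n))^2) \<le> 1 / (real (Suc n))^2"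
    using damped_cos_series_term_bound assms(2,3) by (intro always_eventually) auto
qed (use sums_summable[OF inverse_Suc_squares_sums] in simp_all)

lemma Ln_one_minus_cis:
  assumes "0 < t" "t < 2 * pi"
  shows "Ln (1 - cis t) = complex_of_real (ln (2 * sin (t/2))) + \<i> * ((t - pi) / 2)"
proof (rule Ln_unique)
  have "sin (t/2) > 0" using assms by (intro sin_gt_zero) auto
  moreover have "cos ((t - pi)/2) = sin (t/2)" "sin ((t - pi)/2) = - cos (t/2)"
    by (simp_all add: cos_diff sin_diff diff_divide_distrib)
  moreover have "cos t = 1 - 2 * (sin (t/2))^2" "sin t = 2 * sin (t/2) * cos (t/2)"
    using cos_double_sin[of "t/2"] sin_double[of "t/2"] by simp_all
  ultimately show "exp (complex_of_real (ln (2 * sin (t/2))) + \<i> * ((t - pi)/2)) = 1 - cis t"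
    by (simp add: complex_eq_iff exp_add Re_exp Im_exp power2_eq_square)
qed (use assms in simp_all)

lemma tendsto_Im_Ln_one_minus_cis:
  assumes "r \<longlonglongrightarrow> 1" "0 < t" "t < 2 * pi"
  shows "(\<lambda>k. Im (Ln (1 - of_real (r k) * cis t))) \<longlonglongrightarrow> (t - pi) / 2"
proof -
  have "cos t < 1"
  proof (cases "t \<le> pi")
    case True thus ?thesis using assms cos_monotone_0_pi[of 0 t] by simp
  next
    case False
    hence "cos (2*pi - t) < cos 0" using assms by (intro cos_monotone_0_pi) auto
    thus ?thesis by simp
  qed
  hence "1 - cis t \<notin> \<real>\<^sub>\<le>\<^sub>0" by (simp add: complex_nonpos_Reals_iff)
  moreover have "(\<lambda>k. 1 - of_real (r k) * cis t) \<longlonglongrightarrow> 1 - cis t"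
    using tendsto_diff[OF tendsto_const tendsto_mult[OF tendsto_of_real[OF assms(1)] tendsto_const]]
    by simp
  ultimately have "(\<lambda>k. Im (Ln (1 - of_real (r k) * cis t))) \<longlonglongrightarrow> Im (Ln (1 - cis t))"
    by (intro tendsto_Im isCont_tendsto_compose[OF continuous_at_Ln])
  thus ?thesis using Ln_one_minus_cis[OF assms(2,3)] by simp
qed

lemma abs_Im_Ln_one_minus_le_pi:
  assumes "0 \<le> r" "r < 1"
  shows "\<bar>Im (Ln (1 - of_real r * cis t))\<bar> \<le> pi"
proof -
  have "r * cos t < 1" using assms mult_left_mono[of "cos t" 1 r] by simp
  hence "1 - of_real r * cis t \<noteq> 0" by (auto simp: complex_eq_iff)
  thus ?thesis using mpi_less_Im_Ln Im_Ln_le_pi by (metis abs_le_iff less_eq_real_def minus_le_iff)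
qed

lemma cos_series_closed_form:
  assumes "0 \<le> y" "y < 2 * pi"
  shows "damped_cos_series 1 y = pi^2/6 - pi * y / 2 + y^2 / 4"
proof -
  define r :: "nat \<Rightarrow> real" where "r k = 1 - 1 / (real k + 2)" for k
  have r: "0 \<le> r k" "r k < 1" for k by (auto simp: r_def field_simps)
  have "(\<lambda>k. 1 / real (Suc (Suc k))) \<longlonglongrightarrow> 0"
    using LIMSEQ_Suc[OF LIMSEQ_Suc[OF lim_const_over_n[of 1]]] by simp
  hence "(\<lambda>k. 1 / (real k + 2)) \<longlonglongrightarrow> 0" by (simp add: add.commute)
  from tendsto_diff[OF tendsto_const[of 1] this] have r_lim: "r \<longlonglongrightarrow> 1"
    by (simp add: r_def[abs_def])
  have F0: "damped_cos_series 1 0 = pi^2 / 6"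
    using inverse_Suc_squares_sums damped_cos_series_sums[of 1 0] by (simp add: sums_iff)
  \<comment> \<open>At \<open>t = 0\<close> the integrand is \<open>Im (Ln (1 - r)) = 0\<close>, not the limit value \<open>-pi/2\<close>;
      changing it on this null set makes the pointwise limit \<open>(t - pi)/2\<close> hold on all of \<open>[0, y]\<close>.\<close>
  define f where "f k t = (if t = 0 then -pi/2 else Im (Ln (1 - of_real (r k) * cis t)))" for k t
  have f_int: "(f k has_integral (damped_cos_series (r k) y - damped_cos_series (r k) 0)) {0..y}" for k
    by (rule has_integral_spike_finite[of "{0}", OF _ _ damped_cos_series_has_integral[OF r assms(1)]])
       (auto simp: f_def)
  have "((\<lambda>t. (t - pi) / 2) has_integral (damped_cos_series 1 y - damped_cos_series 1 0)) {0..y}"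
  proof (rule has_integral_dominated_convergence[OF f_int, where h = "\<lambda>_. pi"])
    show "(\<lambda>k. damped_cos_series (r k) y - damped_cos_series (r k) 0)
            \<longlonglongrightarrow> damped_cos_series 1 y - damped_cos_series 1 0"
      using r r_lim by (intro tendsto_diff tendsto_damped_cos_series) (auto intro: less_imp_le)
    show "\<forall>x\<in>{0..y}. (\<lambda>k. f k x) \<longlonglongrightarrow> (x - pi) / 2"
    proof
      fix x assume "x \<in> {0..y}"
      thus "(\<lambda>k. f k x) \<longlonglongrightarrow> (x - pi) / 2"
        using assms tendsto_Im_Ln_one_minus_cis[OF r_lim, of x] by (cases "x = 0") (auto simp: f_def)
    qed
  qed (use abs_Im_Ln_one_minus_le_pi[OF r] in \<open>auto simp: f_def\<close>)
  moreover have "((\<lambda>t. (t - pi) / 2) has_integral (y^2/4 - pi*y/2 - (0^2/4 - pi*0/2))) {0..y}"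
  proof (rule fundamental_theorem_of_calculus[OF assms(1)])
    fix x
    have "((\<lambda>t. t^2/4 - pi*t/2) has_real_derivative (x - pi) / 2) (at x within {0..y})"
      by (auto intro!: derivative_eq_intros simp: field_simps)
    thus "((\<lambda>t. t^2/4 - pi*t/2) has_vector_derivative (x - pi) / 2) (at x within {0..y})"
      by (simp add: has_real_derivative_iff_has_vector_derivative)
  qed
  ultimately have "damped_cos_series 1 y - damped_cos_series 1 0 = y^2/4 - pi*y/2 - (0^2/4 - pi*0/2)"
    by (rule has_integral_unique)
  thus ?thesis using F0 by simp
qed

lemma sinc_minus [simp]: "sinc (- x) = sinc x"
  by (simp add: sinc_def)

lemma sinc_squared:
  assumes "x \<noteq> 0"
  shows "(sinc x)^2 = (1 - cos (2 * pi * x)) / (2 * pi^2 * x^2)"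
proof -
  have "cos (2 * (pi * x)) = 1 - 2 * (sin (pi * x))^2" by (rule cos_double_sin)
  thus ?thesis using assms by (simp add: sinc_def power_divide power_mult_distrib field_simps)
qed

lemma cos_two_pi_nat_mult_frac: "cos (2 * pi * (real n * x)) = cos (real n * (2 * pi * frac x))"
proof -
  have "2 * pi * (real n * x) = real n * (2 * pi * frac x) + (2 * pi) * of_int (int n * \<lfloor>x\<rfloor>)"
    by (simp add: frac_def algebra_simps)
  thus ?thesis by (simp only: cos_add cos_int_2pin sin_int_2pin mult_1_right mult_zero_right diff_zero)
qed

lemma sinc_squares_sums:
  assumes "a > 0"
  shows "(\<lambda>n. (sinc (real (Suc n) * a))^2) sums ((frac a - (frac a)^2) / (2 * a^2))"
proof -
  define y where "y = 2 * pi * frac a"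
  have "0 \<le> y" "y < 2 * pi" using frac_lt_1[of a] by (simp_all add: y_def)
  have "(\<lambda>n. (1 - cos (real (Suc n) * y)) / (real (Suc n))^2) sums (pi^2/6 - damped_cos_series 1 y)"
    using sums_diff[OF inverse_Suc_squares_sums damped_cos_series_sums[of 1 y]]
    by (simp add: diff_divide_distrib)
  also have "pi^2/6 - damped_cos_series 1 y = pi^2 * (frac a - (frac a)^2)"
    using cos_series_closed_form[OF \<open>0 \<le> y\<close> \<open>y < 2 * pi\<close>]
    by (simp add: y_def power2_eq_square algebra_simps)
  finally have "(\<lambda>n. (1 - cos (real (Suc n) * y)) / (real (Suc n))^2 / (2 * pi^2 * a^2))
                  sums (pi^2 * (frac a - (frac a)^2) / (2 * pi^2 * a^2))"
    by (rule sums_divide)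
  moreover have "(sinc (real (Suc n) * a))^2
                   = (1 - cos (real (Suc n) * y)) / (real (Suc n))^2 / (2 * pi^2 * a^2)" for n
  proof -
    have "(sinc (real (Suc n) * a))^2
            = (1 - cos (2 * pi * (real (Suc n) * a))) / (2 * pi^2 * (real (Suc n) * a)^2)"
      using assms by (intro sinc_squared) simp
    also have "cos (2 * pi * (real (Suc n) * a)) = cos (real (Suc n) * y)"
      unfolding y_def by (rule cos_two_pi_nat_mult_frac)
    finally show ?thesis by (simp add: power_mult_distrib divide_divide_eq_left mult_ac)
  qed
  ultimately show ?thesis by simp
qed

lemma has_sum_nonzero_int_if_even:
  fixes f :: "int \<Rightarrow> real"
  assumes even: "\<And>l. f (- l) = f l" and nonneg: "\<And>l. 0 \<le> f l"
    and sums: "(\<lambda>n. f (int (Suc n))) sums s"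
  shows "(f has_sum (2 * s)) (UNIV - {0})"
proof -
  have pos: "range (\<lambda>n. int (Suc n)) = {0<..}"
  proof (intro set_eqI iffI)
    fix l :: int assume "l \<in> {0<..}"
    hence "l = int (Suc (nat l - 1))" by simp
    thus "l \<in> range (\<lambda>n. int (Suc n))" by blast
  qed auto
  have inj_pos: "inj (\<lambda>n. int (Suc n))" and inj_neg: "inj_on uminus ({0<..} :: int set)"
    by (simp_all add: inj_on_def)
  have "(f has_sum s) (range (\<lambda>n. int (Suc n)))"
    unfolding has_sum_reindex[OF inj_pos] o_def by (rule sums_nonneg_imp_has_sum[OF sums nonneg])
  hence sum_pos: "(f has_sum s) {0<..}" unfolding pos .
  hence sum_neg: "(f has_sum s) (uminus ` {0<..})"
    unfolding has_sum_reindex[OF inj_neg] o_def even .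
  have "{0<..} \<inter> uminus ` {0<..} = ({} :: int set)" by auto
  from has_sum_Un_disjoint[OF sum_pos sum_neg this]
  have "(f has_sum (s + s)) ({0<..} \<union> uminus ` {0<..})" .
  moreover have "{0<..} \<union> uminus ` {0<..} = UNIV - {0 :: int}"
  proof (intro set_eqI iffI)
    fix l :: int assume "l \<in> UNIV - {0}"
    hence "0 < l \<or> l = - (- l) \<and> 0 < - l" by auto
    thus "l \<in> {0<..} \<union> uminus ` {0<..}" by blast
  qed auto
  ultimately show ?thesis by (simp only: mult_2)
qed

lemma gain_squares_has_sum:
  assumes "\<theta> > 0"
  shows "((\<lambda>l. \<bar>gain \<zeta> P \<theta> l\<bar>^2) has_sum
           ((\<zeta> * P)^2 * \<theta>^2 * (frac (1/\<theta>) - (frac (1/\<theta>))^2))) (UNIV - {0})"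
proof -
  have "(\<lambda>n. (sinc (real_of_int (int (Suc n)) * (1/\<theta>)))^2)
          sums ((frac (1/\<theta>) - (frac (1/\<theta>))^2) / (2 * (1/\<theta>)^2))"
    using sinc_squares_sums[of "1/\<theta>"] assms by (simp only: of_int_of_nat_eq zero_less_divide_1_iff)
  hence "((\<lambda>l. (sinc (real_of_int l * (1/\<theta>)))^2) has_sum
          (2 * ((frac (1/\<theta>) - (frac (1/\<theta>))^2) / (2 * (1/\<theta>)^2)))) (UNIV - {0})"
    by (rule has_sum_nonzero_int_if_even[rotated 2])
       (simp_all only: of_int_minus mult_minus_left sinc_minus zero_le_power2)
  hence "((\<lambda>l. (\<zeta> * P)^2 * (sinc (real_of_int l * (1/\<theta>)))^2) has_sum
          ((\<zeta> * P)^2 * (2 * ((frac (1/\<theta>) - (frac (1/\<theta>))^2) / (2 * (1/\<theta>)^2))))) (UNIV - {0})"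
    by (rule has_sum_cmult_right)
  moreover have "(\<zeta> * P)^2 * (2 * ((frac (1/\<theta>) - (frac (1/\<theta>))^2) / (2 * (1/\<theta>)^2)))
                   = (\<zeta> * P)^2 * \<theta>^2 * (frac (1/\<theta>) - (frac (1/\<theta>))^2)"
    by (simp add: power_divide)
  moreover have "\<bar>gain \<zeta> P \<theta> l\<bar>^2 = (\<zeta> * P)^2 * (sinc (real_of_int l * (1/\<theta>)))^2" for l
    by (simp add: gain_def power_mult_distrib)
  ultimately show ?thesis by simp
qed

theorem mainTheorem4:
  fixes \<theta> \<zeta> P N0 \<alpha> \<beta> :: real
  assumes "\<theta> > 0" and "\<zeta> > 0" and "P > 0"
    and "\<beta> = of_int \<lfloor>1 / \<theta>\<rfloor>"
    and "\<alpha> = 1 / \<theta> - \<beta>"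
  shows "(\<lambda>l. \<bar>gain \<zeta> P \<theta> l\<bar>^2) summable_on (UNIV - {0::int})
    \<and> interference \<zeta> P \<theta> = \<zeta> * P * (\<theta>^2 * (\<beta>^2 + 2 * \<alpha> * \<beta> + \<alpha>) - 1)
    \<and> ln (1 + \<zeta> * P / (N0 + interference \<zeta> P \<theta>))
        = ln (1 + \<zeta> * P / (N0 + \<zeta> * P * (\<theta>^2 * (\<beta>^2 + 2 * \<alpha> * \<beta> + \<alpha>) - 1)))
    \<and> (1 / \<theta> \<in> \<int> \<longrightarrow> interference \<zeta> P \<theta> = 0)"
proof -
  have frac: "frac (1 / \<theta>) = \<alpha>" using assms(4,5) by (simp add: frac_def)
  have sum: "((\<lambda>l. \<bar>gain \<zeta> P \<theta> l\<bar>^2) has_sum ((\<zeta> * P)^2 * \<theta>^2 * (\<alpha> - \<alpha>^2))) (UNIV - {0})"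
    using gain_squares_has_sum[OF assms(1)] frac by simp
  have I: "interference \<zeta> P \<theta> = \<zeta> * P * \<theta>^2 * (\<alpha> - \<alpha>^2)"
    using infsumI[OF sum] assms(2,3) by (simp add: interference_def power2_eq_square field_simps)
  have "\<theta> * (\<alpha> + \<beta>) = 1" using assms(1,5) by simp
  hence "\<theta>^2 * (\<beta>^2 + 2 * \<alpha> * \<beta> + \<alpha>) - 1
           = \<theta>^2 * (\<beta>^2 + 2 * \<alpha> * \<beta> + \<alpha>) - (\<theta> * (\<alpha> + \<beta>))^2"
    by simp
  also have "\<dots> = \<theta>^2 * (\<alpha> - \<alpha>^2)" by (simp add: power2_eq_square algebra_simps)
  finally have closed_form: "interference \<zeta> P \<theta> = \<zeta> * P * (\<theta>^2 * (\<beta>^2 + 2 * \<alpha> * \<beta> + \<alpha>) - 1)"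
    using I by (simp add: mult.assoc)
  have "1 / \<theta> \<in> \<int> \<longrightarrow> interference \<zeta> P \<theta> = 0"
    using I frac frac_eq_0_iff[of "1 / \<theta>"] by auto
  with has_sum_imp_summable[OF sum] closed_form show ?thesis by simp
qed

end
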